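(* Let $\mathfrak{g}=\prod_{i=1}^k\mathfrak{q}_i$ be a semisimple complex Lie algebra with each $\mathfrak{q}_i$ simple of type $A_{n_i}$. Let $r$ denote the rank of $\mathfrak{g}$ and let $V$ be a faithful representation of $\mathfrak{g}$. Let $\langle-,-\rangle$ be any $W_{\mathfrak{g}}$-invariant inner product on $\Lambda_{\mathfrak{g}}\otimes\mathbb{R}$, and let $W_{\max}$ denote the set of weights of $V$ of maximal norm. If $W_{\max}$ spans $\Lambda_{\mathfrak{g}}\otimes\mathbb{R}$, then $\#W_{\max}\geq r+1$, with equality holding possibly only if $k=1$.
   Context: $\Lambda_{\mathfrak{g}}$ is the weight lattice of $\mathfrak{g}$ (with respect to a fixed Cartan subalgebra) and $W_{\mathfrak{g}}$ its Weyl group; weights of $V$ are the characters of the Cartan subalgebra occurring in $V$. *)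

theory Defs
  imports Complex_Main "Jordan_Normal_Form.Matrix"
begin

text \<open>The Lie algebra g = prod_{i<k} sl(n_i+1, C), given by the list ns = [n_0,...,n_{k-1}].
  An element is a function i |-> (n_i+1)x(n_i+1) traceless complex matrix (zero 0x0 matrix for i >= k).\<close>

definition lie_carrier :: "nat list \<Rightarrow> (nat \<Rightarrow> complex mat) set" where
  "lie_carrier ns = {X. (\<forall>i < length ns. X i \<in> carrier_mat (ns!i + 1) (ns!i + 1)
        \<and> (\<Sum>j\<le>ns!i. X i $$ (j, j)) = 0) \<and> (\<forall>i \<ge> length ns. X i = 0\<^sub>m 0 0)}"

definition lie_add :: "(nat \<Rightarrow> complex mat) \<Rightarrow> (nat \<Rightarrow> complex mat) \<Rightarrow> (nat \<Rightarrow> complex mat)" where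
  "lie_add X Y = (\<lambda>i. X i + Y i)"

definition lie_smult :: "complex \<Rightarrow> (nat \<Rightarrow> complex mat) \<Rightarrow> (nat \<Rightarrow> complex mat)" where
  "lie_smult a X = (\<lambda>i. a \<cdot>\<^sub>m X i)"

definition lie_bracket :: "(nat \<Rightarrow> complex mat) \<Rightarrow> (nat \<Rightarrow> complex mat) \<Rightarrow> (nat \<Rightarrow> complex mat)" where
  "lie_bracket X Y = (\<lambda>i. X i * Y i - Y i * X i)"

definition is_rep :: "nat list \<Rightarrow> nat \<Rightarrow> ((nat \<Rightarrow> complex mat) \<Rightarrow> complex mat) \<Rightarrow> bool" where
  "is_rep ns d \<rho> \<longleftrightarrow>
     (\<forall>X \<in> lie_carrier ns. \<rho> X \<in> carrier_mat d d) \<and>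
     (\<forall>X \<in> lie_carrier ns. \<forall>Y \<in> lie_carrier ns. \<rho> (lie_add X Y) = \<rho> X + \<rho> Y) \<and>
     (\<forall>a. \<forall>X \<in> lie_carrier ns. \<rho> (lie_smult a X) = a \<cdot>\<^sub>m \<rho> X) \<and>
     (\<forall>X \<in> lie_carrier ns. \<forall>Y \<in> lie_carrier ns.
         \<rho> (lie_bracket X Y) = \<rho> X * \<rho> Y - \<rho> Y * \<rho> X)"

definition faithful_rep :: "nat list \<Rightarrow> nat \<Rightarrow> ((nat \<Rightarrow> complex mat) \<Rightarrow> complex mat) \<Rightarrow> bool" where
  "faithful_rep ns d \<rho> \<longleftrightarrow> is_rep ns d \<rho> \<and> inj_on \<rho> (lie_carrier ns)"

definition cartan :: "nat list \<Rightarrow> (nat \<Rightarrow> complex mat) set" where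
  "cartan ns = {H \<in> lie_carrier ns. \<forall>i < length ns. diagonal_mat (H i)}"

definition idx :: "nat list \<Rightarrow> (nat \<times> nat) set" where
  "idx ns = {(i, j). i < length ns \<and> j \<le> ns!i}"

text \<open>A functional on h is written H |-> sum_{i,j} c i j * (H i)_{jj}; on the factor sl(n_i+1)
  the coefficients are determined modulo constants, and we normalise them to sum zero.
  So Lambda_g \<otimes> R is identified with the coefficient vectors c, supported on idx ns,
  with sum_j c i j = 0 for every i.\<close>

definition wt_space :: "nat list \<Rightarrow> (nat \<Rightarrow> nat \<Rightarrow> real) set" where
  "wt_space ns = {c. (\<forall>i j. (i, j) \<notin> idx ns \<longrightarrow> c i j = 0) \<and>
                     (\<forall>i < length ns. (\<Sum>j\<le>ns!i. c i j) = 0)}"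

definition wt_eval :: "nat list \<Rightarrow> (nat \<Rightarrow> nat \<Rightarrow> real) \<Rightarrow> (nat \<Rightarrow> complex mat) \<Rightarrow> complex" where
  "wt_eval ns c H = (\<Sum>i<length ns. \<Sum>j\<le>ns!i. complex_of_real (c i j) * H i $$ (j, j))"

definition weights :: "nat list \<Rightarrow> nat \<Rightarrow> ((nat \<Rightarrow> complex mat) \<Rightarrow> complex mat)
                         \<Rightarrow> (nat \<Rightarrow> nat \<Rightarrow> real) set" where
  "weights ns d \<rho> = {c \<in> wt_space ns. \<exists>v \<in> carrier_vec d. v \<noteq> 0\<^sub>v d \<and>
       (\<forall>H \<in> cartan ns. \<rho> H *\<^sub>v v = wt_eval ns c H \<cdot>\<^sub>v v)}"

text \<open>Weyl group S_{n_0+1} x ... x S_{n_{k-1}+1}, acting by permuting coordinates.\<close>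

definition weyl :: "nat list \<Rightarrow> (nat \<Rightarrow> nat \<Rightarrow> nat) set" where
  "weyl ns = {\<sigma>. \<forall>i < length ns. bij_betw (\<sigma> i) {..ns!i} {..ns!i}}"

definition weyl_act :: "nat list \<Rightarrow> (nat \<Rightarrow> nat \<Rightarrow> nat) \<Rightarrow> (nat \<Rightarrow> nat \<Rightarrow> real) \<Rightarrow> (nat \<Rightarrow> nat \<Rightarrow> real)" where
  "weyl_act ns \<sigma> c = (\<lambda>i j. if (i, j) \<in> idx ns then c i (\<sigma> i j) else 0)"

definition weyl_inv_inner :: "nat list \<Rightarrow> ((nat \<Rightarrow> nat \<Rightarrow> real) \<Rightarrow> (nat \<Rightarrow> nat \<Rightarrow> real) \<Rightarrow> real) \<Rightarrow> bool" where
  "weyl_inv_inner ns B \<longleftrightarrow>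
     (\<forall>a b. \<forall>x \<in> wt_space ns. \<forall>y \<in> wt_space ns. \<forall>z \<in> wt_space ns.
        B (\<lambda>i j. a * x i j + b * y i j) z = a * B x z + b * B y z) \<and>
     (\<forall>x \<in> wt_space ns. \<forall>y \<in> wt_space ns. B x y = B y x) \<and>
     (\<forall>x \<in> wt_space ns. x \<noteq> (\<lambda>i j. 0) \<longrightarrow> B x x > 0) \<and>
     (\<forall>\<sigma> \<in> weyl ns. \<forall>x \<in> wt_space ns. \<forall>y \<in> wt_space ns.
        B (weyl_act ns \<sigma> x) (weyl_act ns \<sigma> y) = B x y)"

definition real_span :: "(nat \<Rightarrow> nat \<Rightarrow> real) set \<Rightarrow> (nat \<Rightarrow> nat \<Rightarrow> real) set" where
  "real_span S = {x. \<exists>T a. finite T \<and> T \<subseteq> S \<and> x = (\<lambda>i j. \<Sum>t\<in>T. a t * t i j)}"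

definition max_weights :: "nat list \<Rightarrow> nat \<Rightarrow> ((nat \<Rightarrow> complex mat) \<Rightarrow> complex mat)
      \<Rightarrow> ((nat \<Rightarrow> nat \<Rightarrow> real) \<Rightarrow> (nat \<Rightarrow> nat \<Rightarrow> real) \<Rightarrow> real) \<Rightarrow> (nat \<Rightarrow> nat \<Rightarrow> real) set" where
  "max_weights ns d \<rho> B = {c \<in> weights ns d \<rho>. \<forall>c' \<in> weights ns d \<rho>. B c' c' \<le> B c c}"

end

(* The Weyl group of g is the product of the symmetric groups S(n_i + 1), and its reflections
   are the transpositions of two coordinates inside one block.  By the representation theory
   of the sl_2-triples of root vectors, the set of weights of V is stable under these
   transpositions, hence so is the set W of weights of maximal norm.  Spanning forces every
   block i to carry some weight that is nonzero, hence nonconstant, on it.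

   Forgetting block j maps W onto a smaller configuration of the same kind, and the fibre of a
   weight that is nonconstant on block j contains at least n_j + 1 of its transposes; induction
   over the blocks gives #W >= n_1 + ... + n_k + 1.  With two or more blocks the bound is strict:
   either two fibres contain weights nonzero on block j, or only one does, in which case its
   base point is invariant under all transpositions, hence zero, and the projected
   configuration contains 0 on top of what the bound counts. *)

theory Submission
  imports Defs "Jordan_Normal_Form.Char_Poly" "HOL-Combinatorics.Transposition"
begin

section \<open>Eigenvalue strings of an sl(2)-action\<close>

definition mat_vec_iter :: "'a::semiring_0 mat \<Rightarrow> nat \<Rightarrow> 'a vec \<Rightarrow> 'a vec" where
  "mat_vec_iter A k v = (((*\<^sub>v) A) ^^ k) v"

lemma mat_vec_iter_0 [simp]: "mat_vec_iter A 0 v = v"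
  by (simp add: mat_vec_iter_def)

lemma mat_vec_iter_Suc [simp]: "mat_vec_iter A (Suc k) v = A *\<^sub>v mat_vec_iter A k v"
  by (simp add: mat_vec_iter_def)

lemma mat_vec_iter_Suc_right: "mat_vec_iter A (Suc k) v = mat_vec_iter A k (A *\<^sub>v v)"
  unfolding mat_vec_iter_def by (simp only: funpow_Suc_right comp_def)

lemma mat_vec_iter_carrier [simp]:
  "A \<in> carrier_mat n n \<Longrightarrow> v \<in> carrier_vec n \<Longrightarrow> mat_vec_iter A k v \<in> carrier_vec n"
  by (induction k) auto

lemma mult_mat_vec_zero [simp]:
  "A \<in> carrier_mat n m \<Longrightarrow> A *\<^sub>v 0\<^sub>v m = (0\<^sub>v n :: 'a::semiring_0 vec)"
  by (intro eq_vecI) (auto simp: scalar_prod_def)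

lemma mat_vec_iter_zero [simp]: "A \<in> carrier_mat n n \<Longrightarrow> mat_vec_iter A k (0\<^sub>v n) = 0\<^sub>v n"
  by (induction k) auto

lemma smult_zero_vec [simp]: "c \<cdot>\<^sub>v 0\<^sub>v n = (0\<^sub>v n :: 'a::semiring_0 vec)"
  by (intro eq_vecI) auto

lemma smult_vec_eq_zero:
  fixes x :: "'a::idom vec"
  assumes "x \<in> carrier_vec n" "x \<noteq> 0\<^sub>v n" "c \<cdot>\<^sub>v x = 0\<^sub>v n"
  shows "c = 0"
proof -
  obtain i where "i < n" "x $ i \<noteq> 0"
    using assms(1,2) by (metis carrier_vecD eq_vecI index_zero_vec)
  moreover have "c * x $ i = 0"
    using assms(3) \<open>i < n\<close> by (metis index_smult_vec(1) index_zero_vec(1) assms(1) carrier_vecD)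
  ultimately show ?thesis by simp
qed

lemma smult_mat_mult_vec:
  "M \<in> carrier_mat n m \<Longrightarrow> u \<in> carrier_vec m \<Longrightarrow>
    (c \<cdot>\<^sub>m M) *\<^sub>v u = c \<cdot>\<^sub>v (M *\<^sub>v (u :: 'a::comm_semiring_0 vec))"
  by (intro eq_vecI) (auto simp: scalar_prod_def sum_distrib_left mult.assoc)

lemma commutator_mult_vec:
  fixes A B C :: "'a::comm_ring mat"
  assumes "A \<in> carrier_mat n n" "B \<in> carrier_mat n n" "C \<in> carrier_mat n n"
    and "A * B - B * A = C" and "u \<in> carrier_vec n"
  shows "A *\<^sub>v (B *\<^sub>v u) = B *\<^sub>v (A *\<^sub>v u) + C *\<^sub>v u"
proof -
  have "C *\<^sub>v u = A *\<^sub>v (B *\<^sub>v u) - B *\<^sub>v (A *\<^sub>v u)"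
    unfolding assms(4)[symmetric] using assms(1,2,5)
    by (subst minus_mult_distrib_mat_vec[of _ n n]) auto
  then show ?thesis
    using assms by (intro eq_vecI) (auto dest!: arg_cong[where f="\<lambda>x. x $ _"])
qed

lemma finite_eigenvalues:
  fixes A :: "'a::field mat"
  assumes "A \<in> carrier_mat n n"
  shows "finite {\<mu>. eigenvalue A \<mu>}"
proof -
  have "char_poly A \<noteq> 0"
    using degree_monic_char_poly[OF assms] by auto
  then show ?thesis
    using eigenvalue_root_char_poly[OF assms] poly_roots_finite by simp
qed

lemma eigenvalueI:
  "A \<in> carrier_mat n n \<Longrightarrow> v \<in> carrier_vec n \<Longrightarrow> v \<noteq> 0\<^sub>v n \<Longrightarrow> A *\<^sub>v v = \<mu> \<cdot>\<^sub>v v \<Longrightarrow> eigenvalue A \<mu>"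
  by (auto simp: eigenvalue_def eigenvector_def)

lemma mat_vec_iter_eigenvector_shift:
  fixes A G :: "'a::field mat"
  assumes A: "A \<in> carrier_mat n n" and G: "G \<in> carrier_mat n n"
    and comm: "A * G - G * A = c \<cdot>\<^sub>m G" and u: "u \<in> carrier_vec n" and Au: "A *\<^sub>v u = \<mu> \<cdot>\<^sub>v u"
  shows "A *\<^sub>v mat_vec_iter G k u = (\<mu> + of_nat k * c) \<cdot>\<^sub>v mat_vec_iter G k u"
proof (induction k)
  case 0
  then show ?case using Au by simp
next
  case (Suc k)
  have w: "mat_vec_iter G k u \<in> carrier_vec n" using G u by simp
  have "A *\<^sub>v mat_vec_iter G (Suc k) u
      = G *\<^sub>v ((\<mu> + of_nat k * c) \<cdot>\<^sub>v mat_vec_iter G k u) + c \<cdot>\<^sub>v (G *\<^sub>v mat_vec_iter G k u)"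
    using commutator_mult_vec[OF A G _ comm w] G w Suc by (simp add: smult_mat_mult_vec)
  also have "\<dots> = (\<mu> + of_nat (Suc k) * c) \<cdot>\<^sub>v mat_vec_iter G (Suc k) u"
    using G w by (subst mult_mat_vec[OF G w]) (auto intro!: eq_vecI simp: algebra_simps)
  finally show ?case .
qed

lemma mat_vec_iter_eventually_zero:
  fixes A G :: "'a::field_char_0 mat"
  assumes A: "A \<in> carrier_mat n n" and G: "G \<in> carrier_mat n n"
    and comm: "A * G - G * A = c \<cdot>\<^sub>m G" and "c \<noteq> 0"
    and u: "u \<in> carrier_vec n" and Au: "A *\<^sub>v u = \<mu> \<cdot>\<^sub>v u"
  obtains j where "mat_vec_iter G j u = 0\<^sub>v n"
proof (rule ccontr)
  assume "\<not> thesis"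
  with that have "mat_vec_iter G j u \<noteq> 0\<^sub>v n" for j by blast
  then have "eigenvalue A (\<mu> + of_nat j * c)" for j
    using eigenvalueI[OF A mat_vec_iter_carrier[OF G u]] mat_vec_iter_eigenvector_shift[OF A G comm u Au]
    by blast
  then have "range (\<lambda>j. \<mu> + of_nat j * c) \<subseteq> {\<mu>. eigenvalue A \<mu>}"
    by auto
  moreover have "inj (\<lambda>j. \<mu> + of_nat j * c)"
    using \<open>c \<noteq> 0\<close> by (auto intro: injI)
  ultimately show False
    using finite_eigenvalues[OF A] finite_subset finite_imageD by blast
qed

locale sl2_action =
  fixes d :: nat and e f h :: "'a::field_char_0 mat"
  assumes e_carrier: "e \<in> carrier_mat d d" and f_carrier: "f \<in> carrier_mat d d"
    and h_carrier: "h \<in> carrier_mat d d"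
    and comm_h_e: "h * e - e * h = 2 \<cdot>\<^sub>m e"
    and comm_h_f: "h * f - f * h = (- 2) \<cdot>\<^sub>m f"
    and comm_e_f: "e * f - f * e = h"
begin

lemma e_f_iter_commute:
  assumes u: "u \<in> carrier_vec d" and hu: "h *\<^sub>v u = \<mu> \<cdot>\<^sub>v u"
  shows "e *\<^sub>v mat_vec_iter f (Suc k) u
    = mat_vec_iter f (Suc k) (e *\<^sub>v u) + (of_nat (Suc k) * (\<mu> - of_nat k)) \<cdot>\<^sub>v mat_vec_iter f k u"
proof (induction k)
  case 0
  then show ?case
    using commutator_mult_vec[OF e_carrier f_carrier h_carrier comm_e_f u] hu by simp
next
  case (Suc k)
  let ?w = "mat_vec_iter f (Suc k) u"
  have w: "mat_vec_iter f k u \<in> carrier_vec d" "?w \<in> carrier_vec d"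
    "mat_vec_iter f (Suc k) (e *\<^sub>v u) \<in> carrier_vec d"
    using u f_carrier e_carrier by auto
  have h_w: "h *\<^sub>v ?w = (\<mu> - 2 * of_nat (Suc k)) \<cdot>\<^sub>v ?w"
    using mat_vec_iter_eigenvector_shift[OF h_carrier f_carrier comm_h_f u hu, of "Suc k"]
    by (simp add: algebra_simps)
  have "e *\<^sub>v mat_vec_iter f (Suc (Suc k)) u = f *\<^sub>v (e *\<^sub>v ?w) + h *\<^sub>v ?w"
    using commutator_mult_vec[OF e_carrier f_carrier h_carrier comm_e_f w(2)] by simp
  also have "\<dots> = f *\<^sub>v (mat_vec_iter f (Suc k) (e *\<^sub>v u)
        + (of_nat (Suc k) * (\<mu> - of_nat k)) \<cdot>\<^sub>v mat_vec_iter f k u)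
      + (\<mu> - 2 * of_nat (Suc k)) \<cdot>\<^sub>v ?w"
    using Suc h_w by (simp del: mat_vec_iter_Suc)
  also have "\<dots> = mat_vec_iter f (Suc (Suc k)) (e *\<^sub>v u)
      + (of_nat (Suc (Suc k)) * (\<mu> - of_nat (Suc k))) \<cdot>\<^sub>v ?w"
    using w f_carrier
    by (subst mult_add_distrib_mat_vec[OF f_carrier], auto, subst mult_mat_vec[OF f_carrier],
        auto intro!: eq_vecI simp: algebra_simps)
  finally show ?case .
qed

lemma highest_weight_string:
  assumes u: "u \<in> carrier_vec d" "u \<noteq> 0\<^sub>v d" and hu: "h *\<^sub>v u = \<mu> \<cdot>\<^sub>v u"
    and eu: "e *\<^sub>v u = 0\<^sub>v d"
  obtains N :: nat where "\<mu> = of_nat N" and "\<And>k. k \<le> N \<Longrightarrow> mat_vec_iter f k u \<noteq> 0\<^sub>v d"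
proof -
  obtain j where "mat_vec_iter f j u = 0\<^sub>v d"
    using mat_vec_iter_eventually_zero[OF h_carrier f_carrier comm_h_f _ u(1) hu] by auto
  define L where "L = (LEAST j. mat_vec_iter f j u = 0\<^sub>v d)"
  have L: "mat_vec_iter f L u = 0\<^sub>v d"
    unfolding L_def by (rule LeastI) fact
  have below_L: "mat_vec_iter f k u \<noteq> 0\<^sub>v d" if "k < L" for k
    using that not_less_Least unfolding L_def by blast
  obtain N where N: "L = Suc N"
    using L u(2) by (cases L) auto
  have "(of_nat (Suc N) * (\<mu> - of_nat N)) \<cdot>\<^sub>v mat_vec_iter f N u = 0\<^sub>v d"
    using e_f_iter_commute[OF u(1) hu, of N] L N eu e_carrier f_carrier u(1)
    by (auto simp del: mat_vec_iter_Suc)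
  then have "of_nat (Suc N) * (\<mu> - of_nat N) = 0"
    using smult_vec_eq_zero below_L[of N] N f_carrier u(1) by (metis lessI mat_vec_iter_carrier)
  then have "\<mu> = of_nat N"
    using of_nat_neq_0[of N, where 'a='a] by simp
  then show thesis
    using that below_L N by (metis le_imp_less_Suc)
qed

text \<open>Induction on the number of raising steps that annihilate \<open>v\<close>: if \<open>e v \<noteq> 0\<close>, the
  claim for \<open>e v\<close>, of \<open>h\<close>-weight \<open>\<mu> + 2\<close>, transfers to \<open>v\<close> through \<open>e_f_iter_commute\<close>.\<close>

lemma weight_string_if_raising_vanishes:
  assumes "mat_vec_iter e (Suc p) v = 0\<^sub>v d" "v \<in> carrier_vec d" "v \<noteq> 0\<^sub>v d" "h *\<^sub>v v = \<mu> \<cdot>\<^sub>v v"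
  shows "\<mu> \<in> \<int> \<and> (\<forall>m. \<mu> = of_nat m \<longrightarrow> mat_vec_iter f m v \<noteq> 0\<^sub>v d)"
  using assms
proof (induction p arbitrary: v \<mu>)
  case 0
  then obtain N where "\<mu> = of_nat N" "\<And>k. k \<le> N \<Longrightarrow> mat_vec_iter f k v \<noteq> 0\<^sub>v d"
    using highest_weight_string by auto
  then show ?case by auto
next
  case (Suc p v \<mu>)
  show ?case
  proof (cases "e *\<^sub>v v = 0\<^sub>v d")
    case True
    then obtain N where "\<mu> = of_nat N" "\<And>k. k \<le> N \<Longrightarrow> mat_vec_iter f k v \<noteq> 0\<^sub>v d"
      using highest_weight_string Suc.prems by metis
    then show ?thesis by auto
  next
    case False
    let ?u = "e *\<^sub>v v"
    have u: "?u \<in> carrier_vec d" using Suc.prems e_carrier by simp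
    have hu: "h *\<^sub>v ?u = (\<mu> + 2) \<cdot>\<^sub>v ?u"
      using mat_vec_iter_eigenvector_shift[OF h_carrier e_carrier comm_h_e Suc.prems(2,4), of 1] by simp
    have "mat_vec_iter e (Suc p) ?u = 0\<^sub>v d"
      using Suc.prems(1) by (simp only: mat_vec_iter_Suc_right[symmetric])
    from Suc.IH[OF this u False hu]
    have IH: "\<mu> + 2 \<in> \<int>" "\<And>m. \<mu> + 2 = of_nat m \<Longrightarrow> mat_vec_iter f m ?u \<noteq> 0\<^sub>v d"
      by auto
    have "\<mu> = (\<mu> + 2) - 2" by simp
    then have "\<mu> \<in> \<int>"
      using IH(1) by (metis Ints_diff Ints_numeral)
    moreover have "mat_vec_iter f m v \<noteq> 0\<^sub>v d" if m: "\<mu> = of_nat m" for m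
    proof
      assume "mat_vec_iter f m v = 0\<^sub>v d"
      then have "mat_vec_iter f (Suc m) v = 0\<^sub>v d" "mat_vec_iter f (Suc (Suc m)) v = 0\<^sub>v d"
        using f_carrier by simp_all
      then have "mat_vec_iter f (Suc (Suc m)) ?u = 0\<^sub>v d"
        using e_f_iter_commute[OF Suc.prems(2,4), of "Suc m"] e_carrier f_carrier u
        by (simp del: mat_vec_iter_Suc)
      moreover have "mat_vec_iter f (Suc (Suc m)) ?u \<noteq> 0\<^sub>v d"
        using IH(2)[of "Suc (Suc m)"] m by simp
      ultimately show False by simp
    qed
    ultimately show ?thesis by blast
  qed
qed

lemma weight_string:
  assumes "v \<in> carrier_vec d" "v \<noteq> 0\<^sub>v d" "h *\<^sub>v v = \<mu> \<cdot>\<^sub>v v"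
  shows "\<mu> \<in> \<int> \<and> (\<forall>m. \<mu> = of_nat m \<longrightarrow> mat_vec_iter f m v \<noteq> 0\<^sub>v d)"
proof -
  obtain j where j: "mat_vec_iter e j v = 0\<^sub>v d"
    using mat_vec_iter_eventually_zero[OF h_carrier e_carrier comm_h_e _ assms(1,3)] by auto
  moreover obtain p where "j = Suc p"
    using j assms(2) by (cases j) auto
  ultimately show ?thesis
    using weight_string_if_raising_vanishes assms by blast
qed

end

section \<open>Root vectors and coroots of the factors\<close>

definition mat_unit :: "nat \<Rightarrow> nat \<Rightarrow> nat \<Rightarrow> complex mat" where
  "mat_unit n a b = mat n n (\<lambda>(x, y). if x = a \<and> y = b then 1 else 0)"

lemma dim_mat_unit [simp]: "dim_row (mat_unit n a b) = n" "dim_col (mat_unit n a b) = n"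
  by (simp_all add: mat_unit_def)

lemma mat_unit_carrier [simp]: "mat_unit n a b \<in> carrier_mat n n"
  by (simp add: carrier_matI)

lemma index_mat_unit [simp]:
  "x < n \<Longrightarrow> y < n \<Longrightarrow> mat_unit n a b $$ (x, y) = (if x = a \<and> y = b then 1 else 0)"
  by (simp add: mat_unit_def)

lemma diagonal_commutator_mat_unit:
  assumes H: "H \<in> carrier_mat n n" "diagonal_mat H" and ab: "a < n" "b < n"
  shows "H * mat_unit n a b - mat_unit n a b * H = (H $$ (a, a) - H $$ (b, b)) \<cdot>\<^sub>m mat_unit n a b"
proof (rule eq_matI)
  fix x y assume "x < dim_row ((H $$ (a, a) - H $$ (b, b)) \<cdot>\<^sub>m mat_unit n a b)"
    "y < dim_col ((H $$ (a, a) - H $$ (b, b)) \<cdot>\<^sub>m mat_unit n a b)"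
  then have x: "x < n" and y: "y < n" by auto
  have off_diag: "H $$ (x, y) = 0" if "x < n" "y < n" "x \<noteq> y" for x y
    using H that unfolding diagonal_mat_def by auto
  have "(H * mat_unit n a b) $$ (x, y) = (\<Sum>z<n. H $$ (x, z) * (if z = a \<and> y = b then 1 else 0))"
    using H x y by (simp add: scalar_prod_def atLeast0LessThan)
  also have "\<dots> = (if y = b then H $$ (x, a) else 0)"
    using ab by (simp add: if_distrib[where f="\<lambda>t. _ * t"] sum.If_cases)
  finally have left: "(H * mat_unit n a b) $$ (x, y) = (if y = b then H $$ (x, a) else 0)" .
  have "(mat_unit n a b * H) $$ (x, y) = (\<Sum>z<n. (if x = a \<and> z = b then 1 else 0) * H $$ (z, y))"
    using H x y by (simp add: scalar_prod_def atLeast0LessThan)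
  also have "\<dots> = (if x = a then H $$ (b, y) else 0)"
    using ab by (simp add: if_distrib[where f="\<lambda>t. t * _"] sum.If_cases)
  finally have right: "(mat_unit n a b * H) $$ (x, y) = (if x = a then H $$ (b, y) else 0)" .
  show "(H * mat_unit n a b - mat_unit n a b * H) $$ (x, y)
      = ((H $$ (a, a) - H $$ (b, b)) \<cdot>\<^sub>m mat_unit n a b) $$ (x, y)"
    using H x y ab left right off_diag[of x a] off_diag[of b y] by auto
qed (use H in auto)

lemma mat_unit_commutator:
  assumes "a < n" "b < n"
  shows "mat_unit n a b * mat_unit n b a - mat_unit n b a * mat_unit n a b
    = mat_unit n a a - mat_unit n b b"
proof (rule eq_matI)
  fix x y assume "x < dim_row (mat_unit n a a - mat_unit n b b)"
    "y < dim_col (mat_unit n a a - mat_unit n b b)"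
  then have "x < n" "y < n" by auto
  then show "(mat_unit n a b * mat_unit n b a - mat_unit n b a * mat_unit n a b) $$ (x, y)
      = (mat_unit n a a - mat_unit n b b) $$ (x, y)"
    using assms
    by (auto simp: scalar_prod_def atLeast0LessThan if_distrib[where f="\<lambda>t. t * _"] cong: if_cong)
qed auto

definition block_embed :: "nat list \<Rightarrow> nat \<Rightarrow> complex mat \<Rightarrow> (nat \<Rightarrow> complex mat)" where
  "block_embed ns i M =
    (\<lambda>j. if j = i then M else if j < length ns then 0\<^sub>m (ns!j + 1) (ns!j + 1) else 0\<^sub>m 0 0)"

definition root_vec :: "nat list \<Rightarrow> nat \<Rightarrow> nat \<Rightarrow> nat \<Rightarrow> (nat \<Rightarrow> complex mat)" where
  "root_vec ns i a b = block_embed ns i (mat_unit (ns!i + 1) a b)"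

definition coroot :: "nat list \<Rightarrow> nat \<Rightarrow> nat \<Rightarrow> nat \<Rightarrow> (nat \<Rightarrow> complex mat)" where
  "coroot ns i a b = block_embed ns i (mat_unit (ns!i + 1) a a - mat_unit (ns!i + 1) b b)"

lemma block_embed_in_lie_carrier:
  assumes "i < length ns" "U \<in> carrier_mat (ns!i + 1) (ns!i + 1)" "(\<Sum>j\<le>ns!i. U $$ (j, j)) = 0"
  shows "block_embed ns i U \<in> lie_carrier ns"
  using assms by (auto simp: lie_carrier_def block_embed_def)

lemma commutator_zero_mat:
  "A \<in> carrier_mat n n \<Longrightarrow> A * 0\<^sub>m n n - 0\<^sub>m n n * A = c \<cdot>\<^sub>m (0\<^sub>m n n :: complex mat)"
  by (intro eq_matI) (auto simp: scalar_prod_def)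

lemma lie_bracket_block_embed:
  assumes H: "H \<in> lie_carrier ns" and i: "i < length ns"
    and U: "U \<in> carrier_mat (ns!i + 1) (ns!i + 1)" and comm: "H i * U - U * H i = c \<cdot>\<^sub>m U"
  shows "lie_bracket H (block_embed ns i U) = lie_smult c (block_embed ns i U)"
proof
  fix j
  have "H j \<in> carrier_mat (ns!j + 1) (ns!j + 1)" if "j < length ns"
    using H that by (auto simp: lie_carrier_def)
  moreover have "H j = 0\<^sub>m 0 0" if "\<not> j < length ns"
    using H that by (auto simp: lie_carrier_def)
  ultimately show "lie_bracket H (block_embed ns i U) j = lie_smult c (block_embed ns i U) j"
    using comm commutator_zero_mat[of "0\<^sub>m 0 0" 0 c]
    by (auto simp: lie_bracket_def lie_smult_def block_embed_def commutator_zero_mat)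
qed

lemma lie_bracket_block_embeds:
  "lie_bracket (block_embed ns i U) (block_embed ns i V) = block_embed ns i (U * V - V * U)"
  using commutator_zero_mat[of "0\<^sub>m (ns!_ + 1) (ns!_ + 1)" "ns!_ + 1" 0]
    commutator_zero_mat[of "0\<^sub>m 0 0" 0 0]
  by (auto simp: lie_bracket_def block_embed_def)

lemma root_vec_in_lie_carrier:
  assumes "i < length ns" "a \<le> ns!i" "b \<le> ns!i" "a \<noteq> b"
  shows "root_vec ns i a b \<in> lie_carrier ns"
  unfolding root_vec_def using assms
  by (intro block_embed_in_lie_carrier) (auto intro!: sum.neutral)

lemma coroot_in_cartan:
  assumes "i < length ns" "a \<le> ns!i" "b \<le> ns!i"
  shows "coroot ns i a b \<in> cartan ns"
proof -
  have "(\<Sum>j\<le>ns!i. (mat_unit (ns!i + 1) a a - mat_unit (ns!i + 1) b b) $$ (j, j))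
      = (\<Sum>j\<le>ns!i. (if j = a then 1 else 0) - (if j = b then 1 else 0))"
    by (rule sum.cong) auto
  also have "\<dots> = 0"
    using assms by (simp add: sum_subtractf)
  finally have "coroot ns i a b \<in> lie_carrier ns"
    unfolding coroot_def using assms(1) by (intro block_embed_in_lie_carrier) auto
  moreover have "diagonal_mat (mat_unit (ns!i + 1) a a - mat_unit (ns!i + 1) b b)"
    by (auto simp: diagonal_mat_def)
  ultimately show ?thesis
    by (auto simp: cartan_def coroot_def block_embed_def diagonal_mat_def)
qed

lemma lie_bracket_cartan_root_vec:
  assumes H: "H \<in> cartan ns" and i: "i < length ns" and ab: "a \<le> ns!i" "b \<le> ns!i"
  shows "lie_bracket H (root_vec ns i a b)
    = lie_smult (H i $$ (a, a) - H i $$ (b, b)) (root_vec ns i a b)"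
proof -
  have "H i \<in> carrier_mat (ns!i + 1) (ns!i + 1)" "diagonal_mat (H i)"
    using H i by (auto simp: cartan_def lie_carrier_def)
  then show ?thesis
    unfolding root_vec_def using H i ab
    by (intro lie_bracket_block_embed) (auto simp: cartan_def diagonal_commutator_mat_unit)
qed

lemma lie_bracket_root_vecs:
  assumes "a \<le> ns!i" "b \<le> ns!i"
  shows "lie_bracket (root_vec ns i a b) (root_vec ns i b a) = coroot ns i a b"
  using assms by (simp add: root_vec_def coroot_def lie_bracket_block_embeds mat_unit_commutator)

lemma coroot_diagonal_entries:
  assumes "i < length ns" "a \<le> ns!i" "b \<le> ns!i" "a \<noteq> b"
  shows "coroot ns i a b i $$ (a, a) = 1" "coroot ns i a b i $$ (b, b) = - 1"
  using assms by (auto simp: coroot_def block_embed_def)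

lemma wt_eval_coroot:
  assumes "i < length ns" "a \<le> ns!i" "b \<le> ns!i"
  shows "wt_eval ns c (coroot ns i a b) = complex_of_real (c i a - c i b)"
proof -
  have "wt_eval ns c (coroot ns i a b)
      = (\<Sum>j\<le>ns!i. complex_of_real (c i j) * coroot ns i a b i $$ (j, j))"
    unfolding wt_eval_def using assms(1)
    by (subst sum.remove[of _ i]) (auto intro!: sum.neutral simp: coroot_def block_embed_def)
  also have "\<dots> = (\<Sum>j\<le>ns!i. (if j = a then complex_of_real (c i j) else 0)
      - (if j = b then complex_of_real (c i j) else 0))"
    by (rule sum.cong) (auto simp: coroot_def block_embed_def)
  also have "\<dots> = complex_of_real (c i a - c i b)"
    using assms by (simp add: sum_subtractf)
  finally show ?thesis .
qed

lemma rep_carrier: "is_rep ns d \<rho> \<Longrightarrow> X \<in> lie_carrier ns \<Longrightarrow> \<rho> X \<in> carrier_mat d d"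
  by (simp add: is_rep_def)

lemma rep_commutator:
  assumes "is_rep ns d \<rho>" "X \<in> lie_carrier ns" "Y \<in> lie_carrier ns"
    and "lie_bracket X Y = lie_smult c Y"
  shows "\<rho> X * \<rho> Y - \<rho> Y * \<rho> X = c \<cdot>\<^sub>m \<rho> Y"
  using assms by (metis is_rep_def)

lemma rep_root_sl2_action:
  assumes rep: "is_rep ns d \<rho>" and i: "i < length ns"
    and ab: "a \<le> ns!i" "b \<le> ns!i" "a \<noteq> b"
  shows "sl2_action d (\<rho> (root_vec ns i a b)) (\<rho> (root_vec ns i b a)) (\<rho> (coroot ns i a b))"
proof -
  have E: "root_vec ns i a b \<in> lie_carrier ns" and F: "root_vec ns i b a \<in> lie_carrier ns"
    using root_vec_in_lie_carrier assms by auto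
  have H: "coroot ns i a b \<in> cartan ns"
    using coroot_in_cartan i ab by blast
  then have H': "coroot ns i a b \<in> lie_carrier ns"
    by (simp add: cartan_def)
  show ?thesis
  proof
    show "\<rho> (coroot ns i a b) * \<rho> (root_vec ns i a b) - \<rho> (root_vec ns i a b) * \<rho> (coroot ns i a b)
        = 2 \<cdot>\<^sub>m \<rho> (root_vec ns i a b)"
      using rep_commutator[OF rep H' E] lie_bracket_cartan_root_vec[OF H i ab(1,2)]
        coroot_diagonal_entries[OF i ab] by simp
    show "\<rho> (coroot ns i a b) * \<rho> (root_vec ns i b a) - \<rho> (root_vec ns i b a) * \<rho> (coroot ns i a b)
        = (- 2) \<cdot>\<^sub>m \<rho> (root_vec ns i b a)"
      using rep_commutator[OF rep H' F] lie_bracket_cartan_root_vec[OF H i ab(2,1)]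
        coroot_diagonal_entries[OF i ab] by simp
    show "\<rho> (root_vec ns i a b) * \<rho> (root_vec ns i b a) - \<rho> (root_vec ns i b a) * \<rho> (root_vec ns i a b)
        = \<rho> (coroot ns i a b)"
      using rep E F lie_bracket_root_vecs[OF ab(1,2)] by (metis is_rep_def)
  qed (use rep_carrier[OF rep] E F H' in auto)
qed

section \<open>Weyl invariance of the weights\<close>

definition block_swap :: "nat \<Rightarrow> nat \<Rightarrow> nat \<Rightarrow> (nat \<Rightarrow> nat \<Rightarrow> real) \<Rightarrow> (nat \<Rightarrow> nat \<Rightarrow> real)" where
  "block_swap i a b c = (\<lambda>i' j. if i' = i then c i (Transposition.transpose a b j) else c i' j)"

lemma block_swap_commute: "block_swap i b a c = block_swap i a b c"
  unfolding block_swap_def by (subst transpose_commute) (rule refl)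

lemma block_swap_same [simp]: "block_swap i a a c = c"
  by (auto simp: block_swap_def Transposition.transpose_def fun_eq_iff)

lemma sum_transpose_mult:
  fixes g w :: "'b \<Rightarrow> 'a::comm_ring"
  assumes "finite S" "a \<in> S" "b \<in> S"
  shows "(\<Sum>j\<in>S. g (Transposition.transpose a b j) * w j)
    = (\<Sum>j\<in>S. g j * w j) + (g b - g a) * (w a - w b)"
proof (cases "a = b")
  case False
  have "(\<Sum>j\<in>S. g (Transposition.transpose a b j) * w j - g j * w j)
      = (\<Sum>j\<in>{a, b}. g (Transposition.transpose a b j) * w j - g j * w j)"
    using assms by (intro sum.mono_neutral_cong_right) auto
  also have "\<dots> = (g b - g a) * (w a - w b)"
    using False by (simp add: algebra_simps)
  finally show ?thesis
    by (simp add: sum_subtractf algebra_simps)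
qed simp

lemma wt_eval_block_swap:
  assumes i: "i < length ns" and ab: "a \<le> ns!i" "b \<le> ns!i"
  shows "wt_eval ns (block_swap i a b c) H
    = wt_eval ns c H - complex_of_real (c i a - c i b) * (H i $$ (a, a) - H i $$ (b, b))"
proof -
  let ?term = "\<lambda>c i'. \<Sum>j\<le>ns!i'. complex_of_real (c i' j) * H i' $$ (j, j)"
  have "wt_eval ns (block_swap i a b c) H - wt_eval ns c H
      = (\<Sum>i'<length ns. if i' = i then ?term (block_swap i a b c) i - ?term c i else 0)"
    unfolding wt_eval_def sum_subtractf[symmetric] by (rule sum.cong) (auto simp: block_swap_def)
  also have "\<dots> = ?term (block_swap i a b c) i - ?term c i"
    using i by simp
  also have "\<dots> = - complex_of_real (c i a - c i b) * (H i $$ (a, a) - H i $$ (b, b))"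
    using sum_transpose_mult[of "{..ns!i}" a b "\<lambda>j. complex_of_real (c i j)" "\<lambda>j. H i $$ (j, j)"] ab
    by (simp add: block_swap_def algebra_simps)
  finally show ?thesis
    by (simp add: algebra_simps)
qed

lemma block_swap_in_wt_space:
  assumes c: "c \<in> wt_space ns" and i: "i < length ns" and ab: "a \<le> ns!i" "b \<le> ns!i"
  shows "block_swap i a b c \<in> wt_space ns"
proof -
  have "(\<Sum>j\<le>ns!i. c i (Transposition.transpose a b j)) = (\<Sum>j\<le>ns!i. c i j)"
    using ab by (intro sum.reindex_bij_betw) simp
  then have "(\<Sum>j\<le>ns!i'. block_swap i a b c i' j) = 0" if "i' < length ns" for i'
    using c that by (cases "i' = i") (auto simp: wt_space_def block_swap_def)
  moreover have "Transposition.transpose a b j = j" if "j > ns!i" for j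
    using ab that by (intro transpose_apply_other) auto
  ultimately show ?thesis
    using c i unfolding wt_space_def idx_def block_swap_def by auto
qed

text \<open>The transposition of \<open>a\<close> and \<open>b\<close> is the reflection in the root \<open>\<epsilon>_a - \<epsilon>_b\<close>.
  It moves \<open>c\<close> down its root string by \<open>m = c_a - c_b\<close> steps, and lowering a weight vector
  of \<open>c\<close> \<open>m\<close> times gives a weight vector of the reflected weight.\<close>

lemma root_vec_lowering_weight_vec:
  assumes rep: "is_rep ns d \<rho>" and i: "i < length ns" and ab: "a \<le> ns!i" "b \<le> ns!i" "a \<noteq> b"
    and v: "v \<in> carrier_vec d"
    and weight_vec: "\<And>H. H \<in> cartan ns \<Longrightarrow> \<rho> H *\<^sub>v v = wt_eval ns c H \<cdot>\<^sub>v v"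
    and m: "c i a - c i b = of_nat m" and H: "H \<in> cartan ns"
  shows "\<rho> H *\<^sub>v mat_vec_iter (\<rho> (root_vec ns i b a)) m v
    = wt_eval ns (block_swap i a b c) H \<cdot>\<^sub>v mat_vec_iter (\<rho> (root_vec ns i b a)) m v"
proof -
  have F: "root_vec ns i b a \<in> lie_carrier ns"
    using root_vec_in_lie_carrier i ab by auto
  have H': "H \<in> lie_carrier ns"
    using H by (simp add: cartan_def)
  have "complex_of_real (c i a - c i b) = of_nat m"
    using m by simp
  then have "wt_eval ns c H + of_nat m * (H i $$ (b, b) - H i $$ (a, a)) = wt_eval ns (block_swap i a b c) H"
    using wt_eval_block_swap[OF i ab(1,2), of c H] by (simp add: algebra_simps)
  then show ?thesis
    using mat_vec_iter_eigenvector_shift[OF rep_carrier[OF rep H'] rep_carrier[OF rep F]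
        rep_commutator[OF rep H' F lie_bracket_cartan_root_vec[OF H i ab(2,1)]] v weight_vec[OF H]]
    by simp
qed

lemma weights_block_swap_ge:
  assumes rep: "is_rep ns d \<rho>" and c: "c \<in> weights ns d \<rho>" and i: "i < length ns"
    and ab: "a \<le> ns!i" "b \<le> ns!i" "a \<noteq> b" and ge: "c i b \<le> c i a"
  shows "block_swap i a b c \<in> weights ns d \<rho>"
proof -
  interpret sl2_action d "\<rho> (root_vec ns i a b)" "\<rho> (root_vec ns i b a)" "\<rho> (coroot ns i a b)"
    by (rule rep_root_sl2_action[OF rep i ab])
  obtain v where v: "v \<in> carrier_vec d" "v \<noteq> 0\<^sub>v d"
    and weight_vec: "\<And>H. H \<in> cartan ns \<Longrightarrow> \<rho> H *\<^sub>v v = wt_eval ns c H \<cdot>\<^sub>v v"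
    using c unfolding weights_def by blast
  have "\<rho> (coroot ns i a b) *\<^sub>v v = complex_of_real (c i a - c i b) \<cdot>\<^sub>v v"
    using weight_vec[OF coroot_in_cartan[OF i ab(1,2)]] wt_eval_coroot[OF i ab(1,2)] by simp
  from weight_string[OF v this]
  have "complex_of_real (c i a - c i b) \<in> \<int>"
    and lower_nonzero: "\<And>m. complex_of_real (c i a - c i b) = of_nat m
      \<Longrightarrow> mat_vec_iter (\<rho> (root_vec ns i b a)) m v \<noteq> 0\<^sub>v d"
    by auto
  then obtain z where "c i a - c i b = of_int z"
    by (metis Ints_cases of_real_eq_iff of_real_of_int_eq)
  moreover have "z \<ge> 0"
    using ge calculation by simp
  ultimately obtain m :: nat where m: "c i a - c i b = of_nat m"
    by (metis nonneg_int_cases of_int_of_nat_eq)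
  have "block_swap i a b c \<in> wt_space ns"
    using block_swap_in_wt_space c i ab by (auto simp: weights_def)
  moreover have "mat_vec_iter (\<rho> (root_vec ns i b a)) m v \<in> carrier_vec d"
    using v f_carrier by simp
  moreover have "mat_vec_iter (\<rho> (root_vec ns i b a)) m v \<noteq> 0\<^sub>v d"
    using lower_nonzero m by simp
  ultimately show ?thesis
    using root_vec_lowering_weight_vec[OF rep i ab v(1) weight_vec m]
    unfolding weights_def by blast
qed

lemma weights_block_swap:
  assumes rep: "is_rep ns d \<rho>" and c: "c \<in> weights ns d \<rho>" and i: "i < length ns"
    and ab: "a \<le> ns!i" "b \<le> ns!i"
  shows "block_swap i a b c \<in> weights ns d \<rho>"
proof (cases "a = b")
  case True
  then show ?thesis using c by simp
next
  case False
  then show ?thesis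
    using weights_block_swap_ge[OF rep c i ab False] weights_block_swap_ge[OF rep c i ab(2,1)]
    by (metis block_swap_commute linorder_linear)
qed

lemma block_swap_weyl_act:
  assumes i: "i < length ns" and ab: "a \<le> ns!i" "b \<le> ns!i"
  shows "(\<lambda>i'. if i' = i then Transposition.transpose a b else id) \<in> weyl ns"
    and "c \<in> wt_space ns \<Longrightarrow>
      weyl_act ns (\<lambda>i'. if i' = i then Transposition.transpose a b else id) c = block_swap i a b c"
proof -
  show "(\<lambda>i'. if i' = i then Transposition.transpose a b else id) \<in> weyl ns"
    using ab by (auto simp: weyl_def)
  assume c: "c \<in> wt_space ns"
  have "Transposition.transpose a b j = j" if "j > ns!i" for j
    using ab that by (intro transpose_apply_other) auto
  then show "weyl_act ns (\<lambda>i'. if i' = i then Transposition.transpose a b else id) c = block_swap i a b c"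
    using c i by (auto simp: weyl_act_def block_swap_def idx_def wt_space_def fun_eq_iff)
qed

definition swap_closed :: "nat list \<Rightarrow> (nat \<Rightarrow> nat \<Rightarrow> real) set \<Rightarrow> bool" where
  "swap_closed ns W \<longleftrightarrow> (\<forall>x\<in>W. \<forall>i<length ns. \<forall>a\<le>ns!i. \<forall>b\<le>ns!i. block_swap i a b x \<in> W)"

lemma max_weights_swap_closed:
  assumes rep: "is_rep ns d \<rho>" and B: "weyl_inv_inner ns B"
  shows "swap_closed ns (max_weights ns d \<rho> B)"
  unfolding swap_closed_def
proof (intro ballI allI impI)
  fix c i a b
  assume c: "c \<in> max_weights ns d \<rho> B" and i: "i < length ns" and ab: "a \<le> ns!i" "b \<le> ns!i"
  then have cw: "c \<in> weights ns d \<rho>" and cW: "c \<in> wt_space ns"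
    by (auto simp: max_weights_def weights_def)
  let ?\<sigma> = "\<lambda>i'. if i' = i then Transposition.transpose a b else id"
  have "B (weyl_act ns ?\<sigma> c) (weyl_act ns ?\<sigma> c) = B c c"
    using B block_swap_weyl_act(1)[OF i ab] cW unfolding weyl_inv_inner_def by blast
  then have "B (block_swap i a b c) (block_swap i a b c) = B c c"
    using block_swap_weyl_act(2)[OF i ab cW] by simp
  then show "block_swap i a b c \<in> max_weights ns d \<rho> B"
    using c weights_block_swap[OF rep cw i ab] by (simp add: max_weights_def)
qed

lemma wt_space_const_block_zero:
  assumes x: "x \<in> wt_space ns" and i: "i < length ns"
    and const: "\<And>a. a \<le> ns!i \<Longrightarrow> x i a = x i t"
  shows "x i t = 0"
proof -
  have "real (Suc (ns!i)) * x i t = (\<Sum>a\<le>ns!i. x i a)"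
    using sum.cong[OF refl const, of "{..ns!i}"] by simp
  also have "\<dots> = 0"
    using x i by (simp add: wt_space_def)
  finally show ?thesis
    by simp
qed

lemma wt_space_eqI:
  assumes c: "c \<in> wt_space ns" and c': "c' \<in> wt_space ns"
    and diffs: "\<And>i a b. i < length ns \<Longrightarrow> a \<le> ns!i \<Longrightarrow> b \<le> ns!i \<Longrightarrow> c i a - c i b = c' i a - c' i b"
  shows "c = c'"
proof (intro ext)
  fix i t
  show "c i t = c' i t"
  proof (cases "(i, t) \<in> idx ns")
    case True
    then have i: "i < length ns" and t: "t \<le> ns!i"
      by (auto simp: idx_def)
    have "(\<lambda>i j. c i j - c' i j) \<in> wt_space ns"
      using c c' by (simp add: wt_space_def sum_subtractf)
    moreover have "c i a - c' i a = c i t - c' i t" if "a \<le> ns!i" for a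
      using diffs[OF i that t] by simp
    ultimately have "c i t - c' i t = 0"
      using wt_space_const_block_zero[of "\<lambda>i j. c i j - c' i j" ns i t] i by blast
    then show ?thesis
      by simp
  next
    case False
    then show ?thesis
      using c c' by (simp add: wt_space_def)
  qed
qed

text \<open>A weight is determined by its values on the coroots, each of which is an eigenvalue
  of a fixed matrix.\<close>

lemma finite_weights:
  assumes rep: "is_rep ns d \<rho>"
  shows "finite (weights ns d \<rho>)"
proof -
  define D where "D = Sigma {..<length ns} (\<lambda>i. {..ns!i} \<times> {..ns!i})"
  define g where "g = (\<lambda>c. restrict (\<lambda>(i, a, b). wt_eval ns c (coroot ns i a b)) D)"
  define E where "E = (\<lambda>(i, a, b). {\<mu>. eigenvalue (\<rho> (coroot ns i a b)) \<mu>})"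
  have coroot: "coroot ns i a b \<in> cartan ns" "coroot ns i a b \<in> lie_carrier ns" if "(i, a, b) \<in> D" for i a b
    using that coroot_in_cartan by (auto simp: D_def cartan_def)
  have "g ` weights ns d \<rho> \<subseteq> PiE D E"
  proof
    fix f assume "f \<in> g ` weights ns d \<rho>"
    then obtain c v where f: "f = g c" and v: "v \<in> carrier_vec d" "v \<noteq> 0\<^sub>v d"
      and weight_vec: "\<And>H. H \<in> cartan ns \<Longrightarrow> \<rho> H *\<^sub>v v = wt_eval ns c H \<cdot>\<^sub>v v"
      unfolding weights_def by blast
    show "f \<in> PiE D E"
      unfolding f g_def E_def
      using eigenvalueI[OF rep_carrier[OF rep] v] coroot weight_vec by auto
  qed
  moreover have "inj_on g (weights ns d \<rho>)"
  proof (rule inj_onI)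
    fix c c' assume c: "c \<in> weights ns d \<rho>" and c': "c' \<in> weights ns d \<rho>" and "g c = g c'"
    then have eval: "wt_eval ns c (coroot ns i a b) = wt_eval ns c' (coroot ns i a b)"
      if "(i, a, b) \<in> D" for i a b
      using that by (metis (no_types, lifting) case_prod_conv restrict_apply' g_def)
    have "c i a - c i b = c' i a - c' i b" if "i < length ns" "a \<le> ns!i" "b \<le> ns!i" for i a b
    proof -
      have "complex_of_real (c i a - c i b) = complex_of_real (c' i a - c' i b)"
        using eval[of i a b] that unfolding wt_eval_coroot[OF that] by (simp add: D_def)
      then show ?thesis
        by (simp only: of_real_eq_iff)
    qed
    then show "c = c'"
      using c c' by (intro wt_space_eqI[of c ns c']) (auto simp: weights_def)
  qed
  moreover have "finite (PiE D E)"
    using finite_eigenvalues[OF rep_carrier[OF rep coroot(2)]]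
    by (intro finite_PiE) (auto simp: D_def E_def)
  ultimately show ?thesis
    by (meson finite_subset inj_on_finite)
qed

section \<open>Counting swap-closed configurations\<close>

definition zero_block :: "nat \<Rightarrow> (nat \<Rightarrow> nat \<Rightarrow> real) \<Rightarrow> (nat \<Rightarrow> nat \<Rightarrow> real)" where
  "zero_block j x = (\<lambda>i t. if i = j then 0 else x i t)"

definition nonzero_on_block :: "nat list \<Rightarrow> nat \<Rightarrow> (nat \<Rightarrow> nat \<Rightarrow> real) \<Rightarrow> bool" where
  "nonzero_on_block ns i x \<longleftrightarrow> (\<exists>t\<le>ns!i. x i t \<noteq> 0)"

definition covers_blocks :: "nat list \<Rightarrow> nat set \<Rightarrow> (nat \<Rightarrow> nat \<Rightarrow> real) set \<Rightarrow> bool" where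
  "covers_blocks ns I W \<longleftrightarrow> (\<forall>i\<in>I. \<exists>x\<in>W. nonzero_on_block ns i x)"

definition finite_swap_closed :: "nat list \<Rightarrow> (nat \<Rightarrow> nat \<Rightarrow> real) set \<Rightarrow> bool" where
  "finite_swap_closed ns W \<longleftrightarrow> finite W \<and> W \<subseteq> wt_space ns \<and> swap_closed ns W"

lemma block_swap_involutory [simp]: "block_swap i a b (block_swap i a b x) = x"
  by (simp add: block_swap_def fun_eq_iff)

lemma block_swap_zero [simp]: "block_swap i a b (\<lambda>_ _. 0) = (\<lambda>_ _. 0)"
  by (simp add: block_swap_def)

lemma block_swap_zero_block_same [simp]: "block_swap j a b (zero_block j x) = zero_block j x"
  by (simp add: block_swap_def zero_block_def fun_eq_iff)

lemma zero_block_block_swap: "i \<noteq> j \<Longrightarrow> zero_block j (block_swap i a b x) = block_swap i a b (zero_block j x)"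
  by (simp add: block_swap_def zero_block_def fun_eq_iff)

lemma nonzero_on_block_block_swap:
  "i \<noteq> j \<Longrightarrow> nonzero_on_block ns j (block_swap i a b x) = nonzero_on_block ns j x"
  by (simp add: nonzero_on_block_def block_swap_def)

lemma nonzero_on_block_zero_block:
  "i \<noteq> j \<Longrightarrow> nonzero_on_block ns i (zero_block j x) = nonzero_on_block ns i x"
  by (simp add: nonzero_on_block_def zero_block_def)

lemma zero_block_in_wt_space:
  assumes "x \<in> wt_space ns"
  shows "zero_block j x \<in> wt_space ns"
proof -
  have "(\<Sum>t\<le>ns!i. zero_block j x i t) = 0" if "i < length ns" for i
    using assms that by (cases "i = j") (auto simp: wt_space_def zero_block_def)
  then show ?thesis
    using assms by (auto simp: wt_space_def zero_block_def)
qed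

lemma finite_swap_closed_image_zero_block:
  assumes "finite_swap_closed ns W"
  shows "finite_swap_closed ns (zero_block j ` W)"
proof -
  have "block_swap i a b (zero_block j x) \<in> zero_block j ` W"
    if "x \<in> W" "i < length ns" "a \<le> ns!i" "b \<le> ns!i" for x i a b
  proof (cases "i = j")
    case False
    then have "zero_block j (block_swap i a b x) \<in> zero_block j ` W"
      using assms that by (auto simp: finite_swap_closed_def swap_closed_def)
    then show ?thesis
      using zero_block_block_swap[OF False] by simp
  qed (use that in simp)
  then show ?thesis
    using assms by (auto simp: finite_swap_closed_def swap_closed_def zero_block_in_wt_space)
qed

lemma covers_blocks_image_zero_block:
  assumes "covers_blocks ns I W" "j \<notin> I"
  shows "covers_blocks ns I (zero_block j ` W)"
proof -
  have "nonzero_on_block ns i (zero_block j x)" if "i \<in> I" "nonzero_on_block ns i x" for i x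
    using that assms(2) nonzero_on_block_zero_block[of i j] by auto
  then show ?thesis
    using assms(1) unfolding covers_blocks_def by blast
qed

lemma finite_swap_closed_remove_zero:
  assumes "finite_swap_closed ns W"
  shows "finite_swap_closed ns (W - {\<lambda>_ _. 0})"
proof -
  have "block_swap i a b x \<noteq> (\<lambda>_ _. 0)" if "x \<noteq> (\<lambda>_ _. 0)" for i a b x
    using that by (metis block_swap_involutory block_swap_zero)
  then show ?thesis
    using assms unfolding finite_swap_closed_def swap_closed_def by blast
qed

lemma nonconst_if_nonzero_on_block:
  assumes "x \<in> wt_space ns" "j < length ns" "nonzero_on_block ns j x"
  obtains a b where "a \<le> ns!j" "b \<le> ns!j" "x j a \<noteq> x j b"
proof -
  obtain t where "t \<le> ns!j" "x j t \<noteq> 0"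
    using assms(3) by (auto simp: nonzero_on_block_def)
  then show thesis
    using that wt_space_const_block_zero[OF assms(1,2), of t] by blast
qed

lemma swap_invariant_wt_eq_zero:
  assumes y: "y \<in> wt_space ns"
    and inv: "\<And>i a b. i < length ns \<Longrightarrow> a \<le> ns!i \<Longrightarrow> b \<le> ns!i \<Longrightarrow> block_swap i a b y = y"
  shows "y = (\<lambda>_ _. 0)"
proof (intro ext)
  fix i t
  have "y i a = y i t" if "i < length ns" "a \<le> ns!i" "t \<le> ns!i" for a
  proof -
    have "block_swap i a t y i a = y i a"
      using inv[OF that] by simp
    then show ?thesis
      by (simp add: block_swap_def)
  qed
  then have "y i t = 0" if "i < length ns" "t \<le> ns!i"
    using wt_space_const_block_zero[OF y] that by blast
  then show "y i t = 0"
    using y by (auto simp: wt_space_def idx_def)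
qed

lemma insert_Diff_single_inj:
  assumes eq: "insert b (A - {a}) = insert b' (A - {a'})" and "a \<in> A" "b \<notin> A"
  shows "a = a'" and "b = b'"
proof -
  show "a = a'"
  proof (rule ccontr)
    assume "a \<noteq> a'"
    then have "a \<in> insert b (A - {a})"
      using eq \<open>a \<in> A\<close> by auto
    then show False
      using assms(2,3) by auto
  qed
  then show "b = b'"
    using eq assms(3) by blast
qed

text \<open>The transposes of \<open>g\<close> by \<open>a \<in> A\<close> and \<open>b \<in> C\<close> differ from \<open>g\<close> and from each
  other: their \<open>g a0\<close>-level sets \<open>A - {a} \<union> {b}\<close> are distinct.\<close>

lemma card_insert_transposes:
  fixes g :: "nat \<Rightarrow> 'a"
  assumes A_def: "A = {a. a \<le> n \<and> g a = g a0}" and C_def: "C = {b. b \<le> n \<and> g b \<noteq> g a0}"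
  shows "card (insert g ((\<lambda>(a, b). g \<circ> Transposition.transpose a b) ` (A \<times> C))) = card A * card C + 1"
proof -
  define level where "level \<phi> = {t. t \<le> n \<and> \<phi> t = g a0}" for \<phi> :: "nat \<Rightarrow> 'a"
  define swap where "swap = (\<lambda>(a, b). g \<circ> Transposition.transpose a b)"
  have disj: "A \<inter> C = {}" and fin_AC: "finite A" "finite C"
    by (auto simp: A_def C_def)
  have level_swap: "level (swap (a, b)) = insert b (A - {a})" if "a \<in> A" "b \<in> C" for a b
  proof -
    have "a \<le> n" "b \<le> n" "g a = g a0" "g b \<noteq> g a0"
      using that by (auto simp: A_def C_def)
    then show ?thesis
      by (auto simp: level_def swap_def A_def Transposition.transpose_def)
  qed
  have "inj_on swap (A \<times> C)"
  proof (rule inj_onI)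
    fix p q assume p: "p \<in> A \<times> C" and q: "q \<in> A \<times> C" and "swap p = swap q"
    then have "insert (snd p) (A - {fst p}) = insert (snd q) (A - {fst q})"
      using level_swap[of "fst p" "snd p"] level_swap[of "fst q" "snd q"] by auto
    moreover have "fst p \<in> A" "snd p \<notin> A"
      using p disj by auto
    ultimately show "p = q"
      using insert_Diff_single_inj by (metis prod_eq_iff)
  qed
  moreover have "g \<notin> swap ` (A \<times> C)"
  proof
    assume "g \<in> swap ` (A \<times> C)"
    then obtain a b where ab: "a \<in> A" "b \<in> C" "g = swap (a, b)"
      by auto
    have "level g = A"
      by (auto simp: level_def A_def)
    then have "insert b (A - {a}) = A"
      using level_swap[OF ab(1,2)] ab(3) by simp
    then show False
      using ab(2) disj by blast
  qed
  ultimately show ?thesis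
    using fin_AC unfolding swap_def[symmetric]
    by (simp add: card_image card_cartesian_product card_insert_disjoint)
qed

lemma card_transposes_ge:
  fixes g :: "nat \<Rightarrow> 'a"
  assumes "a0 \<le> n" "b0 \<le> n" "g a0 \<noteq> g b0"
  shows "n + 1 \<le> card ((\<lambda>(a, b). g \<circ> Transposition.transpose a b) ` ({..n} \<times> {..n}))"
proof -
  define A where "A = {a. a \<le> n \<and> g a = g a0}"
  define C where "C = {b. b \<le> n \<and> g b \<noteq> g a0}"
  let ?swap = "\<lambda>(a, b). g \<circ> Transposition.transpose a b"
  have A_C: "A \<union> C = {..n}" "A \<inter> C = {}" "a0 \<in> A" "b0 \<in> C" "finite A" "finite C"
    using assms by (auto simp: A_def C_def)
  have "g = ?swap (a0, a0)"
    by simp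
  then have "insert g (?swap ` (A \<times> C)) \<subseteq> ?swap ` ({..n} \<times> {..n})"
    using A_C(1,3) by blast
  then have "card (insert g (?swap ` (A \<times> C))) \<le> card (?swap ` ({..n} \<times> {..n}))"
    by (rule card_mono[rotated]) simp
  then have "card A * card C + 1 \<le> card (?swap ` ({..n} \<times> {..n}))"
    unfolding card_insert_transposes[OF A_def C_def] .
  moreover have "card A + card C = n + 1"
    using card_Un_disjoint[OF A_C(5,6,2)] A_C(1) by simp
  moreover have "card A \<ge> 1" "card C \<ge> 1"
    using A_C(3-6) by (auto simp: Suc_le_eq card_gt_0_iff)
  then have "card A + card C \<le> card A * card C + 1"
    by (cases "card A"; cases "card C") auto
  ultimately show ?thesis
    by linarith
qed

lemma card_fibre_zero_block_ge:
  assumes W: "finite_swap_closed ns W" and x: "x \<in> W" and j: "j < length ns"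
    and nonzero: "nonzero_on_block ns j x"
  shows "ns!j + 1 \<le> card {z\<in>W. zero_block j z = zero_block j x}"
proof -
  have fin: "finite W" and closed: "swap_closed ns W"
    using W by (simp_all add: finite_swap_closed_def)
  obtain a0 b0 where nonconst: "a0 \<le> ns!j" "b0 \<le> ns!j" "x j a0 \<noteq> x j b0"
    using nonconst_if_nonzero_on_block[OF _ j nonzero] W x by (auto simp: finite_swap_closed_def)
  let ?T = "(\<lambda>(a, b). x j \<circ> Transposition.transpose a b) ` ({..ns!j} \<times> {..ns!j})"
  let ?lift = "\<lambda>\<phi> i t. if i = j then \<phi> t else x i t"
  have "?lift (x j \<circ> Transposition.transpose a b) = block_swap j a b x" for a b
    by (simp add: block_swap_def fun_eq_iff)
  moreover have "block_swap j a b x \<in> W" if "a \<le> ns!j" "b \<le> ns!j" for a b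
    using closed x j that unfolding swap_closed_def by blast
  moreover have "zero_block j (block_swap j a b x) = zero_block j x" for a b
    by (simp add: zero_block_def block_swap_def fun_eq_iff)
  ultimately have "?lift ` ?T \<subseteq> {z\<in>W. zero_block j z = zero_block j x}"
    by auto
  moreover have "inj_on ?lift ?T"
  proof (rule inj_onI)
    fix \<phi> \<psi> assume "?lift \<phi> = ?lift \<psi>"
    from fun_cong[OF this, of j] show "\<phi> = \<psi>"
      by simp
  qed
  ultimately have "card ?T \<le> card {z\<in>W. zero_block j z = zero_block j x}"
    using fin card_inj_on_le[of ?lift ?T] by simp
  then show ?thesis
    using card_transposes_ge[OF nonconst] by linarith
qed

lemma card_image_add_card_fibres_le:
  assumes "finite W" "Y \<subseteq> g ` W"
  shows "card (g ` W) + (\<Sum>y\<in>Y. card {x\<in>W. g x = y}) \<le> card W + card Y"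
proof -
  let ?fibre = "\<lambda>y. card {x\<in>W. g x = y}"
  have fin: "finite (g ` W)" "finite Y"
    using assms finite_subset by auto
  have "1 \<le> ?fibre y" if "y \<in> g ` W" for y
    using that assms(1) by (auto simp: Suc_le_eq card_gt_0_iff)
  then have outside_Y: "card (g ` W - Y) \<le> (\<Sum>y\<in>g ` W - Y. ?fibre y)"
    unfolding card_eq_sum[of "g ` W - Y"] by (intro sum_mono) auto
  have "card W = (\<Sum>y\<in>g ` W. ?fibre y)"
    using sum.group[OF assms(1) fin(1) subset_refl, of "\<lambda>_. 1::nat"] by simp
  also have "\<dots> = (\<Sum>y\<in>Y. ?fibre y) + (\<Sum>y\<in>g ` W - Y. ?fibre y)"
    using sum.subset_diff[OF assms(2) fin(1), of ?fibre] by (simp add: add.commute)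
  finally show ?thesis
    using outside_Y card_Diff_subset[OF fin(2) assms(2)] card_mono[OF fin(1) assms(2)] by linarith
qed

lemma card_ge_block_sum:
  assumes "finite I" "I \<subseteq> {..<length ns}" "finite_swap_closed ns W" "W \<noteq> {}"
    and "covers_blocks ns I W"
  shows "(\<Sum>i\<in>I. ns!i) + 1 \<le> card W"
  using assms
proof (induction I arbitrary: W rule: finite_induct)
  case empty
  then show ?case
    by (simp add: Suc_le_eq card_gt_0_iff finite_swap_closed_def)
next
  case (insert j I W)
  let ?P = "zero_block j ` W"
  have j: "j < length ns"
    using insert.prems(1) by auto
  obtain x where x: "x \<in> W" "nonzero_on_block ns j x"
    using insert.prems(4) by (auto simp: covers_blocks_def)
  have "(\<Sum>i\<in>I. ns!i) + 1 \<le> card ?P"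
    using insert.IH[of ?P] insert.prems insert.hyps(2) finite_swap_closed_image_zero_block
      covers_blocks_image_zero_block[of ns I W j] by (auto simp: covers_blocks_def)
  moreover have "card ?P + card {z\<in>W. zero_block j z = zero_block j x} \<le> card W + 1"
    using card_image_add_card_fibres_le[of W "{zero_block j x}" "zero_block j"] insert.prems(2) x(1)
    by (simp add: finite_swap_closed_def)
  moreover have "ns!j + 1 \<le> card {z\<in>W. zero_block j z = zero_block j x}"
    using card_fibre_zero_block_ge[OF insert.prems(2) x(1) j x(2)] .
  ultimately show ?case
    using insert.hyps by simp
qed

lemma card_ge_block_sum_if_zero:
  assumes "finite I" "I \<subseteq> {..<length ns}" "I \<noteq> {}" "finite_swap_closed ns W"
    and "covers_blocks ns I W" "(\<lambda>_ _. 0) \<in> W"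
  shows "(\<Sum>i\<in>I. ns!i) + 2 \<le> card W"
proof -
  have "x \<noteq> (\<lambda>_ _. 0)" if "nonzero_on_block ns i x" for i x
    using that by (auto simp: nonzero_on_block_def)
  then have "covers_blocks ns I (W - {\<lambda>_ _. 0})"
    using assms(5) unfolding covers_blocks_def by blast
  moreover then have "W - {\<lambda>_ _. 0} \<noteq> {}"
    using assms(3) by (auto simp: covers_blocks_def)
  ultimately have "(\<Sum>i\<in>I. ns!i) + 1 \<le> card (W - {\<lambda>_ _. 0})"
    using card_ge_block_sum[OF assms(1,2) finite_swap_closed_remove_zero[OF assms(4)]] by blast
  then show ?thesis
    using assms(4,6) by (simp add: finite_swap_closed_def)
qed

lemma zero_block_eq_zero_if_single_fibre:
  assumes W: "W \<subseteq> wt_space ns" "swap_closed ns W" and x0: "x0 \<in> W" "nonzero_on_block ns j x0"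
    and single: "\<And>x. x \<in> W \<Longrightarrow> nonzero_on_block ns j x \<Longrightarrow> zero_block j x = zero_block j x0"
  shows "zero_block j x0 = (\<lambda>_ _. 0)"
proof (rule swap_invariant_wt_eq_zero)
  show "zero_block j x0 \<in> wt_space ns"
    using zero_block_in_wt_space W(1) x0(1) by blast
  fix i a b assume i: "i < length ns" and ab: "a \<le> ns!i" "b \<le> ns!i"
  show "block_swap i a b (zero_block j x0) = zero_block j x0"
  proof (cases "i = j")
    case False
    then have "block_swap i a b x0 \<in> W" "nonzero_on_block ns j (block_swap i a b x0)"
      using W(2) x0 i ab nonzero_on_block_block_swap by (auto simp: swap_closed_def)
    then have "zero_block j (block_swap i a b x0) = zero_block j x0"
      using single by blast
    then show ?thesis
      using zero_block_block_swap[OF False] by simp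
  qed simp
qed

lemma card_gt_block_sum:
  assumes "finite I" "I \<subseteq> {..<length ns}" "j \<in> I" "I \<noteq> {j}" "1 \<le> ns!j"
    and "finite_swap_closed ns W" "covers_blocks ns I W"
  shows "(\<Sum>i\<in>I. ns!i) + 2 \<le> card W"
proof -
  let ?I = "I - {j}" and ?P = "zero_block j ` W"
  let ?fibre = "\<lambda>y. card {z\<in>W. zero_block j z = y}"
  have j: "j < length ns"
    using assms(2,3) by auto
  have W: "finite W" "W \<subseteq> wt_space ns" "swap_closed ns W"
    using assms(6) by (auto simp: finite_swap_closed_def)
  have "covers_blocks ns ?I W"
    using assms(7) by (simp add: covers_blocks_def)
  then have P: "finite_swap_closed ns ?P" "covers_blocks ns ?I ?P"
    using finite_swap_closed_image_zero_block[OF assms(6)] covers_blocks_image_zero_block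
    by auto
  have I: "finite ?I" "?I \<subseteq> {..<length ns}" "?I \<noteq> {}"
    using assms(1-4) by auto
  have sum: "(\<Sum>i\<in>I. ns!i) = ns!j + (\<Sum>i\<in>?I. ns!i)"
    using assms(1,3) by (simp add: sum.remove)
  note fibre_ge = card_fibre_zero_block_ge[OF assms(6) _ j]
  obtain x0 where x0: "x0 \<in> W" "nonzero_on_block ns j x0"
    using assms(3,7) by (auto simp: covers_blocks_def)
  let ?y0 = "zero_block j x0"
  show ?thesis
  proof (cases "\<exists>x1\<in>W. nonzero_on_block ns j x1 \<and> zero_block j x1 \<noteq> ?y0")
    case True
    then obtain x1 where x1: "x1 \<in> W" "nonzero_on_block ns j x1" "zero_block j x1 \<noteq> ?y0"
      by blast
    have "card ?P + (?fibre ?y0 + ?fibre (zero_block j x1)) \<le> card W + 2"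
      using card_image_add_card_fibres_le[of W "{?y0, zero_block j x1}" "zero_block j"] W(1) x0(1) x1
      by auto
    moreover have "(\<Sum>i\<in>?I. ns!i) + 1 \<le> card ?P"
      using card_ge_block_sum[OF I(1,2) P(1) _ P(2)] x0(1) by blast
    ultimately show ?thesis
      using sum fibre_ge[OF x0] fibre_ge[OF x1(1) x1(2)] assms(5) by linarith
  next
    case False
    then have "?y0 = (\<lambda>_ _. 0)"
      using zero_block_eq_zero_if_single_fibre[OF W(2,3) x0] by blast
    then have "(\<Sum>i\<in>?I. ns!i) + 2 \<le> card ?P"
      using card_ge_block_sum_if_zero[OF I P] x0(1) by (metis image_eqI)
    moreover have "card ?P + ?fibre ?y0 \<le> card W + 1"
      using card_image_add_card_fibres_le[of W "{?y0}" "zero_block j"] W(1) x0(1) by simp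
    ultimately show ?thesis
      using sum fibre_ge[OF x0] by linarith
  qed
qed

section \<open>Weights of maximal norm\<close>

lemma real_span_vanishing:
  assumes "\<And>x. x \<in> M \<Longrightarrow> x i t = 0" "y \<in> real_span M"
  shows "y i t = 0"
  using assms by (auto simp: real_span_def intro!: sum.neutral)

lemma covers_blocks_if_real_span:
  assumes span: "real_span M = wt_space ns" and n: "\<forall>n\<in>set ns. n \<ge> 1"
  shows "covers_blocks ns {..<length ns} M"
  unfolding covers_blocks_def
proof (rule ballI, rule ccontr)
  fix i assume "i \<in> {..<length ns}" and none: "\<not> (\<exists>x\<in>M. nonzero_on_block ns i x)"
  then have i: "i < length ns" and "ns!i \<ge> 1"
    using n by auto
  define w :: "nat \<Rightarrow> nat \<Rightarrow> real" where
    "w = (\<lambda>i' j. if i' = i then (if j = 0 then 1 else 0) - (if j = 1 then 1 else 0) else 0)"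
  have "(\<Sum>j\<le>ns!i. w i j)
      = (\<Sum>j\<le>ns!i. if j = 0 then 1 else 0) - (\<Sum>j\<le>ns!i. if j = 1 then 1 else 0)"
    by (simp add: w_def sum_subtractf)
  also have "\<dots> = 0"
    using \<open>ns!i \<ge> 1\<close> by simp
  finally have "(\<Sum>j\<le>ns!i'. w i' j) = 0" for i'
    by (cases "i' = i") (simp_all add: w_def)
  moreover have "w i' j = 0" if "(i', j) \<notin> idx ns" for i' j
    using that i \<open>ns!i \<ge> 1\<close> by (auto simp: w_def idx_def)
  ultimately have "w \<in> real_span M"
    unfolding span wt_space_def by simp
  moreover have "x i 0 = 0" if "x \<in> M" for x
    using none that by (auto simp: nonzero_on_block_def)
  ultimately have "w i 0 = 0"
    using real_span_vanishing by blast
  then show False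
    by (simp add: w_def)
qed

lemma max_weights_finite_swap_closed:
  assumes rep: "is_rep ns d \<rho>" and B: "weyl_inv_inner ns B"
  shows "finite_swap_closed ns (max_weights ns d \<rho> B)"
proof -
  have "max_weights ns d \<rho> B \<subseteq> weights ns d \<rho>" "weights ns d \<rho> \<subseteq> wt_space ns"
    by (auto simp: max_weights_def weights_def)
  then show ?thesis
    using finite_subset[OF _ finite_weights[OF rep]] max_weights_swap_closed[OF rep B]
    unfolding finite_swap_closed_def by blast
qed

theorem lemma5p6:
  fixes ns :: "nat list" and d :: nat
    and \<rho> :: "(nat \<Rightarrow> complex mat) \<Rightarrow> complex mat"
    and B :: "(nat \<Rightarrow> nat \<Rightarrow> real) \<Rightarrow> (nat \<Rightarrow> nat \<Rightarrow> real) \<Rightarrow> real"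
  assumes "ns \<noteq> []"
    and "\<forall>n \<in> set ns. n \<ge> 1"
    and "faithful_rep ns d \<rho>"
    and "weyl_inv_inner ns B"
    and "real_span (max_weights ns d \<rho> B) = wt_space ns"
  shows "card (max_weights ns d \<rho> B) \<ge> sum_list ns + 1 \<and>
         (card (max_weights ns d \<rho> B) = sum_list ns + 1 \<longrightarrow> length ns = 1)"
proof -
  let ?M = "max_weights ns d \<rho> B"
  have closed: "finite_swap_closed ns ?M"
    using max_weights_finite_swap_closed[OF _ assms(4)] assms(3) by (simp add: faithful_rep_def)
  have cover: "covers_blocks ns {..<length ns} ?M"
    using covers_blocks_if_real_span[OF assms(5,2)] .
  have sum: "(\<Sum>i\<in>{..<length ns}. ns!i) = sum_list ns"
    by (simp add: sum_list_sum_nth atLeast0LessThan)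
  have "0 < length ns"
    using assms(1) by simp
  then have "1 \<le> ns!0" and "0 \<in> {..<length ns}"
    using assms(2) nth_mem by auto
  then have "sum_list ns + 1 \<le> card ?M"
    using card_ge_block_sum[OF finite_lessThan subset_refl closed _ cover] cover sum
    by (auto simp: covers_blocks_def)
  moreover have "sum_list ns + 2 \<le> card ?M" if "length ns \<noteq> 1"
  proof -
    have "1 \<in> {..<length ns}"
      using \<open>0 < length ns\<close> that by (simp add: nat_neq_iff)
    then have "{..<length ns} \<noteq> {0}"
      by auto
    then show ?thesis
      using card_gt_block_sum[OF finite_lessThan subset_refl \<open>0 \<in> _\<close> _ \<open>1 \<le> ns!0\<close> closed cover] sum
      by simp
  qed
  ultimately show ?thesis
    by (cases "length ns = 1") auto
qed

end
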